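(* Let $(\alpha,\beta)\in\mathcal{A}(K,L,T)$, let $p$ (resp. $q$) be the vector of entries of $\alpha$ (resp. $\beta$) sorted increasingly, and let $a=\min\operatorname{Set}(\alpha)$, $A=\max\operatorname{Set}(\alpha)$, $b=\min\operatorname{Set}(\beta)$, $B=\max\operatorname{Set}(\beta)$. (1) If $1\le i<K+T$ and $p_i+B<(p_{i+1}-1)+b$, then $(\alpha',\beta)\in\mathcal{A}(K,L,T)$ and $\operatorname{N}(\alpha',\beta)=\operatorname{N}(\alpha,\beta)$, where $\alpha'_j=\alpha_j$ if $\alpha_j\le p_i$ and $\alpha'_j=\alpha_j-1$ otherwise (the splitting of $\alpha'$ into prefix of length $K$ and suffix of length $T$ being the same as for $\alpha$). (2) If $1\le i<L+T$ and $q_i+A<(q_{i+1}-1)+a$, then $(\alpha,\beta')\in\mathcal{A}(K,L,T)$ and $\operatorname{N}(\alpha,\beta')=\operatorname{N}(\alpha,\beta)$, where $\beta'_j=\beta_j$ if $\beta_j\le q_i$ and $\beta'_j=\beta_j-1$ otherwise.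
   Context: A degree table with parameters $K,L,T$ is a tuple $(\alpha_{\mathrm p},\alpha_{\mathrm s},\beta_{\mathrm p},\beta_{\mathrm s})$ of nonnegative integer vectors of lengths $K,T,L,T$ such that, with $\alpha=(\alpha_{\mathrm p}\mid\alpha_{\mathrm s})$ and $\beta=(\beta_{\mathrm p}\mid\beta_{\mathrm s})$: (i) entries of $\alpha$ are distinct; (ii) entries of $\beta$ are distinct; (iii) for every integer $n\in\operatorname{Set}(\alpha_{\mathrm p})+\operatorname{Set}(\beta_{\mathrm p})$ there is a unique $i\in\operatorname{Set}(\alpha)$ and unique $j\in\operatorname{Set}(\beta)$ with $n=i+j$. $\operatorname{Set}(v)$ is the set of entries of $v$, $A+B=\{a+b\}$, $\mathcal{A}(K,L,T)$ is the set of degree tables and $\operatorname{N}(\alpha,\beta)=|\operatorname{Set}(\alpha)+\operatorname{Set}(\beta)|$. *)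

theory Defs
  imports Main
begin

definition sumset :: "nat set \<Rightarrow> nat set \<Rightarrow> nat set" where
  "sumset A B = {x + y | x y. x \<in> A \<and> y \<in> B}"

text \<open>Degree tables: vectors are lists of naturals; alpha = ap @ as, beta = bp @ bs.\<close>
definition degree_table ::
  "nat \<Rightarrow> nat \<Rightarrow> nat \<Rightarrow> nat list \<Rightarrow> nat list \<Rightarrow> nat list \<Rightarrow> nat list \<Rightarrow> bool" where
  "degree_table K L T ap as bp bs \<longleftrightarrow>
     length ap = K \<and> length as = T \<and> length bp = L \<and> length bs = T \<and>
     distinct (ap @ as) \<and> distinct (bp @ bs) \<and>
     (\<forall>n \<in> sumset (set ap) (set bp).
        \<exists>!(i, j). i \<in> set (ap @ as) \<and> j \<in> set (bp @ bs) \<and> n = i + j)"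

definition N_deg :: "nat list \<Rightarrow> nat list \<Rightarrow> nat" where
  "N_deg \<alpha> \<beta> = card (sumset (set \<alpha>) (set \<beta>))"

definition shift_down :: "nat \<Rightarrow> nat list \<Rightarrow> nat list" where
  "shift_down c v = map (\<lambda>x. if x \<le> c then x else x - 1) v"

end

(* Split the sums x + y (x an entry of alpha, y of beta) into low ones, x <= p_i, and high ones.
   The hypothesis p_i + B < (p_{i+1} - 1) + b says that every high sum exceeds every low sum by at
   least 2.  Lowering the high entries of alpha by one therefore lowers the high sums by exactly one
   and leaves the low ones fixed, so two pairs (x, y) have equal sums before the shift iff they do
   after it.  This transports distinctness, uniqueness of representations and the number of sums.
   Part (2) is part (1) with the roles of alpha and beta exchanged. *)
theory Submission
  imports Defs
begin

lemma sumset_eq_image: "sumset A B = (\<lambda>(x, y). x + y) ` (A \<times> B)"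
  unfolding sumset_def by auto

lemma sumset_commute: "sumset A B = sumset B A"
  unfolding sumset_def by (metis add.commute)

lemma N_deg_commute: "N_deg \<alpha> \<beta> = N_deg \<beta> \<alpha>"
  unfolding N_deg_def by (simp add: sumset_commute)

lemma Ex1_case_prod_swap: "(\<exists>!(i, j). P i j) \<longleftrightarrow> (\<exists>!(j, i). P i j)"
  by auto

lemma Ex1_case_prod_unique: "\<exists>!(i, j). P i j \<Longrightarrow> P x y \<Longrightarrow> P x' y' \<Longrightarrow> (x, y) = (x', y')"
  by (metis (mono_tags) case_prod_conv ex1E)

lemma unique_sum_repr_commute:
  "(\<exists>!(i, j). i \<in> X \<and> j \<in> Y \<and> (n::nat) = i + j) \<longleftrightarrow> (\<exists>!(i, j). i \<in> Y \<and> j \<in> X \<and> n = i + j)"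
proof -
  have "(\<exists>!(i, j). i \<in> X \<and> j \<in> Y \<and> n = i + j) \<longleftrightarrow> (\<exists>!(j, i). i \<in> X \<and> j \<in> Y \<and> n = i + j)"
    by (rule Ex1_case_prod_swap)
  also have "\<dots> \<longleftrightarrow> (\<exists>!(i, j). i \<in> Y \<and> j \<in> X \<and> n = i + j)"
    by (simp only: add.commute[of _ "_::nat"] conj_commute conj_left_commute)
  finally show ?thesis .
qed

lemma degree_table_swap:
  assumes "degree_table K L T ap as bp bs"
  shows "degree_table L K T bp bs ap as"
proof -
  have "\<forall>n \<in> sumset (set bp) (set ap).
      \<exists>!(i, j). i \<in> set (bp @ bs) \<and> j \<in> set (ap @ as) \<and> n = i + j"
  proof
    fix n
    assume "n \<in> sumset (set bp) (set ap)"
    with assms have "\<exists>!(i, j). i \<in> set (ap @ as) \<and> j \<in> set (bp @ bs) \<and> n = i + j"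
      unfolding degree_table_def by (simp add: sumset_commute)
    then show "\<exists>!(i, j). i \<in> set (bp @ bs) \<and> j \<in> set (ap @ as) \<and> n = i + j"
      by (rule unique_sum_repr_commute[THEN iffD1])
  qed
  with assms show ?thesis
    unfolding degree_table_def by blast
qed

lemma card_image_eq_if_same_kernel:
  assumes "\<And>p p'. p \<in> S \<Longrightarrow> p' \<in> S \<Longrightarrow> F p = F p' \<longleftrightarrow> G p = G p'"
  shows "card (F ` S) = card (G ` S)"
proof -
  define h where "h z = G (inv_into S F z)" for z
  have h_F: "h (F p) = G p" if "p \<in> S" for p
  proof -
    have "inv_into S F (F p) \<in> S" "F (inv_into S F (F p)) = F p"
      using that by (simp_all add: inv_into_into f_inv_into_f)
    with assms that show ?thesis
      unfolding h_def by blast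
  qed
  have "inj_on h (F ` S)"
  proof (rule inj_onI)
    fix z z'
    assume "z \<in> F ` S" "z' \<in> F ` S" "h z = h z'"
    then obtain p p' where p: "p \<in> S" "p' \<in> S" and z: "z = F p" "z' = F p'"
      by blast
    with \<open>h z = h z'\<close> have "G p = G p'"
      by (simp add: h_F)
    with assms p z show "z = z'"
      by blast
  qed
  moreover have "h ` F ` S = G ` S"
    using h_F by (simp add: image_image)
  ultimately show ?thesis
    using card_image[of h "F ` S"] by simp
qed

lemma sumset_image_left: "sumset (g ` A) B = (\<lambda>(x, y). g x + y) ` (A \<times> B)"
  unfolding sumset_def by auto

lemma N_deg_map_left:
  assumes "\<And>x x' y y'. x \<in> set \<alpha> \<Longrightarrow> x' \<in> set \<alpha> \<Longrightarrow> y \<in> set \<beta> \<Longrightarrow> y' \<in> set \<beta> \<Longrightarrow>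
      g x + y = g x' + y' \<longleftrightarrow> x + y = x' + y'"
  shows "N_deg (map g \<alpha>) \<beta> = N_deg \<alpha> \<beta>"
  unfolding N_deg_def set_map sumset_image_left sumset_eq_image[of "set \<alpha>"]
proof (rule card_image_eq_if_same_kernel)
  fix p p'
  assume "p \<in> set \<alpha> \<times> set \<beta>" "p' \<in> set \<alpha> \<times> set \<beta>"
  with assms show "(case p of (x, y) \<Rightarrow> g x + y) = (case p' of (x, y) \<Rightarrow> g x + y) \<longleftrightarrow>
      (case p of (x, y) \<Rightarrow> x + y) = (case p' of (x, y) \<Rightarrow> x + y)"
    by (auto split: prod.splits)
qed

lemma degree_table_map_left:
  assumes tab: "degree_table K L T ap as bp bs" and ne: "bp @ bs \<noteq> []"
    and sums: "\<And>x x' y y'. x \<in> set (ap @ as) \<Longrightarrow> x' \<in> set (ap @ as) \<Longrightarrow>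
      y \<in> set (bp @ bs) \<Longrightarrow> y' \<in> set (bp @ bs) \<Longrightarrow> g x + y = g x' + y' \<longleftrightarrow> x + y = x' + y'"
  shows "degree_table K L T (map g ap) (map g as) bp bs"
proof -
  define X where "X = set (ap @ as)"
  define Y where "Y = set (bp @ bs)"
  have gX: "set (map g ap @ map g as) = g ` X"
    unfolding X_def by auto
  obtain y0 where "y0 \<in> Y"
    using ne last_in_set unfolding Y_def by blast
  have "inj_on g X"
  proof (rule inj_onI)
    fix x x'
    assume "x \<in> X" "x' \<in> X" "g x = g x'"
    with sums[of x x' y0 y0] \<open>y0 \<in> Y\<close> show "x = x'"
      unfolding X_def Y_def by simp
  qed
  then have "distinct (map g ap @ map g as)"
    using tab unfolding degree_table_def X_def
    by (simp only: map_append[symmetric] distinct_map)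
  moreover have "\<exists>!(i, j). i \<in> set (map g ap @ map g as) \<and> j \<in> Y \<and> n = i + j"
    if n: "n \<in> sumset (set (map g ap)) (set bp)" for n
  proof -
    obtain x y where xy: "x \<in> set ap" "y \<in> set bp" "n = g x + y"
      using n unfolding sumset_def by auto
    then have "x + y \<in> sumset (set ap) (set bp)"
      unfolding sumset_def by blast
    then have uniq: "\<exists>!(i, j). i \<in> X \<and> j \<in> Y \<and> x + y = i + j"
      using tab unfolding degree_table_def X_def Y_def by blast
    have "x \<in> X" "y \<in> Y"
      using xy unfolding X_def Y_def by auto
    show ?thesis
      unfolding gX
    proof (rule ex1I[of _ "(g x, y)"])
      show "case (g x, y) of (i, j) \<Rightarrow> i \<in> g ` X \<and> j \<in> Y \<and> n = i + j"
        using xy \<open>x \<in> X\<close> \<open>y \<in> Y\<close> by simp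
    next
      fix z
      assume "case z of (i, j) \<Rightarrow> i \<in> g ` X \<and> j \<in> Y \<and> n = i + j"
      then obtain x' y' where z: "z = (g x', y')" "x' \<in> X" "y' \<in> Y" "n = g x' + y'"
        by auto
      with xy sums[of x x' y y'] \<open>x \<in> X\<close> \<open>y \<in> Y\<close> have "x + y = x' + y'"
        unfolding X_def Y_def by simp
      with z \<open>x \<in> X\<close> \<open>y \<in> Y\<close> have "(x, y) = (x', y')"
        by (intro Ex1_case_prod_unique[OF uniq]) simp_all
      with z show "z = (g x, y)"
        by simp
    qed
  qed
  ultimately show ?thesis
    using tab unfolding degree_table_def Y_def by simp
qed

definition sum_gap_above :: "nat \<Rightarrow> nat set \<Rightarrow> nat set \<Rightarrow> bool" where
  "sum_gap_above c X Y \<longleftrightarrow> (\<forall>x\<in>X. c < x \<longrightarrow> (\<forall>y\<in>Y. \<forall>y'\<in>Y. c + y' + 1 < x + y))"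

lemma shift_sum_eq_iff:
  assumes gap: "sum_gap_above c X Y" and "x \<in> X" "x' \<in> X" "y \<in> Y" "y' \<in> Y"
  shows "(if x \<le> c then x else x - 1) + y = (if x' \<le> c then x' else x' - 1) + y' \<longleftrightarrow>
    x + y = x' + y'"
proof -
  have "c + y' + 1 < x + y" "c + y + 1 < x + y" if "c < x"
    using gap assms that unfolding sum_gap_above_def by blast+
  moreover have "c + y + 1 < x' + y'" "c + y' + 1 < x' + y'" if "c < x'"
    using gap assms that unfolding sum_gap_above_def by blast+
  ultimately show ?thesis
    by (cases "x \<le> c"; cases "x' \<le> c") auto
qed

lemma sum_gap_above_sort_nth:
  fixes v :: "nat list"
  assumes i: "Suc i < length v" and lt: "sort v ! i + M < (sort v ! Suc i - 1) + m"
    and Y: "\<forall>y\<in>Y. m \<le> y \<and> y \<le> M"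
  shows "sum_gap_above (sort v ! i) (set v) Y"
  unfolding sum_gap_above_def
proof (intro ballI impI)
  fix x y y'
  assume x: "x \<in> set v" "sort v ! i < x" and y: "y \<in> Y" "y' \<in> Y"
  obtain k where k: "k < length v" "x = sort v ! k"
    using x(1) by (metis in_set_conv_nth length_sort set_sort)
  have "Suc i \<le> k"
  proof (rule ccontr)
    assume "\<not> Suc i \<le> k"
    then have "x \<le> sort v ! i"
      using k i by (simp add: sorted_nth_mono)
    with x(2) show False
      by simp
  qed
  then have "sort v ! Suc i \<le> x"
    using k by (simp add: sorted_nth_mono)
  moreover have "m \<le> y" "y \<le> M" "y' \<le> M"
    using Y y by auto
  ultimately show "sort v ! i + y' + 1 < x + y"
    using lt by arith
qed

lemma shift_down_left:
  assumes tab: "degree_table K L T ap as bp bs" and ne: "bp @ bs \<noteq> []"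
    and gap: "sum_gap_above c (set (ap @ as)) (set (bp @ bs))"
  shows "degree_table K L T (shift_down c ap) (shift_down c as) bp bs \<and>
    N_deg (shift_down c (ap @ as)) (bp @ bs) = N_deg (ap @ as) (bp @ bs)"
proof -
  let ?s = "\<lambda>x::nat. if x \<le> c then x else x - 1"
  have sums: "?s x + y = ?s x' + y' \<longleftrightarrow> x + y = x' + y'"
    if "x \<in> set (ap @ as)" "x' \<in> set (ap @ as)" "y \<in> set (bp @ bs)" "y' \<in> set (bp @ bs)"
    for x x' y y'
    using shift_sum_eq_iff[OF gap that] .
  show ?thesis
    unfolding shift_down_def
    using degree_table_map_left[OF tab ne sums] N_deg_map_left[of "ap @ as" "bp @ bs" ?s, OF sums]
    by simp
qed

lemma shift_down_right:
  assumes tab: "degree_table K L T ap as bp bs" and ne: "ap @ as \<noteq> []"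
    and gap: "sum_gap_above c (set (bp @ bs)) (set (ap @ as))"
  shows "degree_table K L T ap as (shift_down c bp) (shift_down c bs) \<and>
    N_deg (ap @ as) (shift_down c (bp @ bs)) = N_deg (ap @ as) (bp @ bs)"
proof -
  have swapped: "degree_table L K T (shift_down c bp) (shift_down c bs) ap as"
    and "N_deg (shift_down c (bp @ bs)) (ap @ as) = N_deg (bp @ bs) (ap @ as)"
    using shift_down_left[OF degree_table_swap[OF tab] ne gap] by simp_all
  with degree_table_swap[OF swapped] show ?thesis
    by (simp add: N_deg_commute[of "ap @ as"])
qed

theorem lemma4:
  fixes K L T :: nat and ap as bp bs :: "nat list"
  assumes tab: "degree_table K L T ap as bp bs"
    and ne_a: "ap @ as \<noteq> []" and ne_b: "bp @ bs \<noteq> []"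
  defines "p \<equiv> sort (ap @ as)" and "q \<equiv> sort (bp @ bs)"
    and "a \<equiv> Min (set (ap @ as))" and "A \<equiv> Max (set (ap @ as))"
    and "b \<equiv> Min (set (bp @ bs))" and "B \<equiv> Max (set (bp @ bs))"
  shows
    "(\<forall>i. 1 \<le> i \<and> i < K + T \<and> p ! (i - 1) + B < (p ! i - 1) + b \<longrightarrow>
        degree_table K L T (shift_down (p ! (i - 1)) ap) (shift_down (p ! (i - 1)) as) bp bs \<and>
        N_deg (shift_down (p ! (i - 1)) (ap @ as)) (bp @ bs) = N_deg (ap @ as) (bp @ bs))
   \<and> (\<forall>i. 1 \<le> i \<and> i < L + T \<and> q ! (i - 1) + A < (q ! i - 1) + a \<longrightarrow>
        degree_table K L T ap as (shift_down (q ! (i - 1)) bp) (shift_down (q ! (i - 1)) bs) \<and>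
        N_deg (ap @ as) (shift_down (q ! (i - 1)) (bp @ bs)) = N_deg (ap @ as) (bp @ bs))"
proof -
  have len: "length (ap @ as) = K + T" "length (bp @ bs) = L + T"
    using tab unfolding degree_table_def by auto
  have bounds: "\<forall>y\<in>set (ap @ as). a \<le> y \<and> y \<le> A" "\<forall>y\<in>set (bp @ bs). b \<le> y \<and> y \<le> B"
    unfolding a_def A_def b_def B_def by simp_all
  have "sum_gap_above (p ! (i - 1)) (set (ap @ as)) (set (bp @ bs))"
    if "1 \<le> i \<and> i < K + T \<and> p ! (i - 1) + B < (p ! i - 1) + b" for i
    using that sum_gap_above_sort_nth[of "i - 1" "ap @ as" B b] len bounds unfolding p_def by simp
  moreover have "sum_gap_above (q ! (i - 1)) (set (bp @ bs)) (set (ap @ as))"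
    if "1 \<le> i \<and> i < L + T \<and> q ! (i - 1) + A < (q ! i - 1) + a" for i
    using that sum_gap_above_sort_nth[of "i - 1" "bp @ bs" A a] len bounds unfolding q_def by simp
  ultimately show ?thesis
    using shift_down_left[OF tab ne_b] shift_down_right[OF tab ne_a] by blast
qed

end
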